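(* Let $f$ be an orientation-preserving homeomorphism of the circle $\mathbb T=\mathbb R/\mathbb Z$ whose rotation number $\rho(f)$ is irrational. Assume $f$ is not topologically conjugate to a rotation. Then ${\rm h_{pol}}(f)=1$.
   Context: The rotation number of $f$ is the class in $\mathbb T$ of $\lim_{n\to\infty}F^n(x)/n$ for a lift $F:\mathbb R\to\mathbb R$ of $f$ (independent of $x$). Polynomial entropy: with $d_n^f(x,y)=\max_{0\le k\le n-1}d(f^k(x),f^k(y))$ for the standard metric $d$ on $\mathbb T$ and $G_n^f(\varepsilon)$ the minimal number of $d_n^f$-balls of radius $\varepsilon$ covering $\mathbb T$, ${\rm h_{pol}}(f)=\lim_{\varepsilon\to0}\limsup_{n\to\infty}\frac{\log G_n^f(\varepsilon)}{\log n}$. *)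

theory Defs
  imports "HOL-Analysis.Analysis"
begin

text \<open>The circle T = R/Z, realised as the unit circle in C via x |-> exp(2 pi i x).\<close>

definition circ :: "real \<Rightarrow> complex" where
  "circ x = cis (2 * pi * x)"

abbreviation Tcirc :: "complex set" where
  "Tcirc \<equiv> sphere 0 1"

text \<open>Standard metric of R/Z transported to the unit circle:
  distance from (arg w - arg z)/(2 pi) to the nearest integer.\<close>
definition tdist :: "complex \<Rightarrow> complex \<Rightarrow> real" where
  "tdist z w = \<bar>Arg (w / z)\<bar> / (2 * pi)"

definition is_lift :: "(complex \<Rightarrow> complex) \<Rightarrow> (real \<Rightarrow> real) \<Rightarrow> bool" where
  "is_lift f F \<longleftrightarrow> continuous_on UNIV F \<and> strict_mono F \<and> (\<forall>x. f (circ x) = circ (F x))"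

definition orient_pres_homeo :: "(complex \<Rightarrow> complex) \<Rightarrow> bool" where
  "orient_pres_homeo f \<longleftrightarrow> (\<exists>g. homeomorphism Tcirc Tcirc f g) \<and> (\<exists>F. is_lift f F)"

definition rotation_number :: "(complex \<Rightarrow> complex) \<Rightarrow> complex" where
  "rotation_number f = (let F = (SOME F. is_lift f F) in circ (lim (\<lambda>n. (F ^^ n) 0 / real n)))"

definition conj_to_rotation :: "(complex \<Rightarrow> complex) \<Rightarrow> bool" where
  "conj_to_rotation f \<longleftrightarrow>
     (\<exists>h g \<alpha>. homeomorphism Tcirc Tcirc h g \<and> (\<forall>z\<in>Tcirc. h (f z) = circ \<alpha> * h z))"

definition dyn_dist :: "(complex \<Rightarrow> complex) \<Rightarrow> nat \<Rightarrow> complex \<Rightarrow> complex \<Rightarrow> real" where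
  "dyn_dist f n z w = (MAX k\<in>{..<n}. tdist ((f ^^ k) z) ((f ^^ k) w))"

definition cover_num :: "(complex \<Rightarrow> complex) \<Rightarrow> nat \<Rightarrow> real \<Rightarrow> nat" where
  "cover_num f n \<epsilon> = Inf {card C | C. finite C \<and> C \<subseteq> Tcirc \<and>
       (\<forall>x\<in>Tcirc. \<exists>c\<in>C. dyn_dist f n c x < \<epsilon>)}"

definition hpol :: "(complex \<Rightarrow> complex) \<Rightarrow> ereal" where
  "hpol f = Lim (at_right 0)
     (\<lambda>\<epsilon>. limsup (\<lambda>n. ereal (ln (real (cover_num f n \<epsilon>)) / ln (real n))))"

end

theory Submission
  imports Defs
begin

text \<open>Since \<open>\<rho>\<close> is irrational,
  \<open>F\<^sup>n y + p - y\<close> never vanishes and hence has the sign of \<open>n\<rho> + p\<close>; so the points \<open>F\<^sup>n 0 + p\<close>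
  are ordered like the points \<open>n\<rho> + p\<close>, and sending \<open>x\<close> to the supremum of the \<open>n\<rho> + p\<close> with
  \<open>F\<^sup>n 0 + p \<le> x\<close> gives Poincar\'e's continuous monotone semiconjugacy,
  \<open>semiconj \<circ> F = semiconj + \<rho>\<close>. If \<open>semiconj\<close> were injective, \<open>f\<close> would be conjugate to the
  rotation by \<open>\<rho>\<close>. So \<open>semiconj\<close> is constant on some interval, and the midpoint \<open>w\<close> of that
  interval never returns \<open>r\<close>-close to itself.

  Then the points \<open>g\<^sup>j w\<close>, \<open>j < n\<close>, are \<open>(n, \<epsilon>)\<close>-separated for \<open>2\<epsilon> \<le> r\<close>, so at least \<open>n\<close> balls
  are needed; conversely, for any circle homeomorphism \<open>n N + 1\<close> balls suffice once \<open>1/N < \<epsilon>\<close>.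
  Linear growth of the covering number gives polynomial entropy \<open>1\<close>.\<close>

section \<open>Distance to the nearest integer and the circle\<close>

definition int_dist :: "real \<Rightarrow> real" where
  "int_dist t = \<bar>t - of_int (round t)\<bar>"

lemma int_dist_le: "int_dist t \<le> \<bar>t - of_int k\<bar>"
  unfolding int_dist_def by (rule round_diff_minimal)

lemma int_dist_le_abs: "int_dist t \<le> \<bar>t\<bar>"
  using int_dist_le[of t 0] by simp

lemma int_dist_minus: "int_dist (- t) = int_dist t"
  using int_dist_le[of "-t" "- round t"] int_dist_le[of t "- round (-t)"]
  by (simp add: int_dist_def abs_minus_commute)

lemma int_dist_triangle: "int_dist (s + t) \<le> int_dist s + int_dist t"
  using int_dist_le[of "s + t" "round s + round t"] by (simp add: int_dist_def)

lemma int_dist_eq_abs_add_int: "\<exists>k::int. int_dist t = \<bar>t + of_int k\<bar>"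
  unfolding int_dist_def by (rule exI[of _ "- round t"]) simp

lemma circ_add: "circ (x + y) = circ x * circ y"
  unfolding circ_def by (simp add: cis_mult distrib_left)

lemma circ_of_int: "circ (of_int k) = 1"
  unfolding circ_def by simp

lemma circ_add_of_int: "circ (x + of_int k) = circ x"
  by (simp add: circ_add circ_of_int)

lemma norm_circ [simp]: "norm (circ x) = 1"
  unfolding circ_def by simp

lemma circ_in_sphere: "circ x \<in> Tcirc"
  by simp

lemma circ_divide: "circ y / circ x = circ (y - x)"
  unfolding circ_def by (simp add: cis_divide right_diff_distrib)

lemma continuous_on_circ: "continuous_on S circ"
  unfolding circ_def cis_conv_exp by (intro continuous_intros)

lemma circ_surj: assumes "z \<in> Tcirc" shows "\<exists>x\<in>{0..<1}. circ x = z"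
proof -
  have "z \<noteq> 0" using assms by auto
  hence "circ (Arg z / (2*pi)) = z"
    using assms cis_Arg[of z] unfolding circ_def by (simp add: sgn_div_norm)
  hence "circ (frac (Arg z / (2*pi))) = z"
    by (metis circ_add_of_int frac_def diff_conv_add_uminus of_int_minus)
  thus ?thesis by (intro bexI[of _ "frac (Arg z / (2*pi))"]) (simp_all add: frac_lt_1)
qed

lemma circ_image_unit_interval: "circ ` {0..1} = Tcirc"
proof
  show "Tcirc \<subseteq> circ ` {0..1}"
  proof
    fix z assume "z \<in> Tcirc"
    then obtain x where "x \<in> {0..<1}" "circ x = z" using circ_surj by blast
    thus "z \<in> circ ` {0..1}" by force
  qed
qed (use circ_in_sphere in auto)

lemma circ_eq_iff: "circ x = circ y \<longleftrightarrow> (\<exists>k::int. y = x + of_int k)"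
proof
  assume "circ x = circ y"
  hence "circ (y - x) = 1" using circ_divide[of y x] by (simp add: circ_def)
  hence "exp (\<i> * complex_of_real (2*pi*(y-x))) = 1" unfolding circ_def cis_conv_exp by simp
  then obtain n::int where "Im (\<i> * complex_of_real (2*pi*(y-x))) = of_int (2 * n) * pi"
    unfolding exp_eq_1 by blast
  hence "y - x = of_int n" using pi_gt_zero by (simp add: mult_ac)
  thus "\<exists>k::int. y = x + of_int k" by (intro exI[of _ n]) simp
next
  assume "\<exists>k::int. y = x + of_int k"
  thus "circ x = circ y" using circ_add_of_int by auto
qed

lemma tdist_circ: "tdist (circ x) (circ y) = int_dist (y - x)"
proof -
  define s where "s = y - x - of_int (round (y - x))"
  have s: "-1/2 \<le> s" "s \<le> 1/2" unfolding s_def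
    using of_int_round_le[of "y - x"] of_int_round_ge[of "y - x"] by linarith+
  have "circ y / circ x = circ (y - x + of_int (- round (y - x)))"
    by (simp only: circ_divide circ_add_of_int)
  hence "circ y / circ x = cis (2 * pi * s)" unfolding s_def circ_def by simp
  moreover have "\<bar>Arg (cis (2 * pi * s))\<bar> = 2 * pi * \<bar>s\<bar>"
  proof (cases "s = -1/2")
    case True
    have "cis (- pi) = cis pi" by (simp add: complex_eq_iff)
    then show ?thesis using True Arg_cis[of pi] pi_gt_zero by simp
  next
    case False
    hence "2 * pi * (- 1/2) < 2 * pi * s" "2 * pi * s \<le> 2 * pi * (1/2)"
      using s pi_gt_zero by (intro mult_strict_left_mono mult_left_mono; simp)+
    hence "2 * pi * s \<in> {-pi<..pi}" by simp
    then show ?thesis by (simp add: Arg_cis abs_mult)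
  qed
  ultimately show ?thesis unfolding tdist_def int_dist_def s_def by simp
qed

lemma tdist_commute:
  assumes "z \<in> Tcirc" "w \<in> Tcirc" shows "tdist z w = tdist w z"
proof -
  obtain x y where "circ x = z" "circ y = w" using circ_surj[OF assms(1)] circ_surj[OF assms(2)] by blast
  thus ?thesis using int_dist_minus[of "y - x"] by (auto simp: tdist_circ)
qed

lemma tdist_triangle:
  assumes "z \<in> Tcirc" "v \<in> Tcirc" "w \<in> Tcirc" shows "tdist z w \<le> tdist z v + tdist v w"
proof -
  obtain x u y where "circ x = z" "circ u = v" "circ y = w"
    using circ_surj[OF assms(1)] circ_surj[OF assms(2)] circ_surj[OF assms(3)] by blast
  thus ?thesis using int_dist_triangle[of "u - x" "y - u"] by (auto simp: tdist_circ)
qed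

lemma continuous_on_sphere_via_circ:
  assumes cont: "continuous_on {0..1} (h \<circ> circ)" and maps: "h \<in> Tcirc \<rightarrow> Tcirc"
  shows "continuous_on Tcirc h"
proof -
  have "openin (top_of_set Tcirc) (Tcirc \<inter> h -` U)" if U: "openin (top_of_set Tcirc) U" for U
  proof -
    have hc: "(h \<circ> circ) \<in> {0..1} \<rightarrow> Tcirc" using maps circ_in_sphere by auto
    have "openin (top_of_set {0..1}) ({0..1} \<inter> (h \<circ> circ) -` U)"
      using cont U continuous_on_open_gen[OF hc] by blast
    moreover have "{0..1} \<inter> (h \<circ> circ) -` U = {0..1} \<inter> circ -` (Tcirc \<inter> h -` U)"
      using circ_in_sphere by auto
    ultimately have "openin (top_of_set {0..1}) ({0..1} \<inter> circ -` (Tcirc \<inter> h -` U))" by simp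
    thus ?thesis
      using Abstract_Topology_2.continuous_imp_quotient_map[of "{0..1}" circ Tcirc "Tcirc \<inter> h -` U"]
        continuous_on_circ circ_image_unit_interval by auto
  qed
  thus ?thesis using continuous_on_open_gen[OF maps] by blast
qed

section \<open>Lifts of circle homeomorphisms\<close>

locale circle_homeo =
  fixes f g :: "complex \<Rightarrow> complex" and F :: "real \<Rightarrow> real"
  assumes homeo: "homeomorphism Tcirc Tcirc f g"
    and lift: "is_lift f F"
begin

lemma continuous_on_lift: "continuous_on S F"
  using lift unfolding is_lift_def by (meson continuous_on_subset subset_UNIV)

lemma strict_mono_lift: "strict_mono F"
  using lift unfolding is_lift_def by blast

lemma lift_circ: "f (circ x) = circ (F x)"
  using lift unfolding is_lift_def by blast

lemma in_sphere_iter: "z \<in> Tcirc \<Longrightarrow> (f ^^ n) z \<in> Tcirc"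
  by (induction n) (use homeo in \<open>auto simp: homeomorphism_def\<close>)

lemma in_sphere_inv_iter: "z \<in> Tcirc \<Longrightarrow> (g ^^ n) z \<in> Tcirc"
  by (induction n) (use homeo in \<open>auto simp: homeomorphism_def\<close>)

lemma iter_inv_iter: "z \<in> Tcirc \<Longrightarrow> j \<le> k \<Longrightarrow> (f ^^ k) ((g ^^ j) z) = (f ^^ (k - j)) z"
proof (induction j arbitrary: k)
  case (Suc j)
  then obtain k' where k': "k = Suc k'" "j \<le> k'" by (cases k) auto
  have "(f ^^ k) ((g ^^ Suc j) z) = (f ^^ k') (f (g ((g ^^ j) z)))"
    by (simp only: k'(1) funpow_Suc_right[where f = f] funpow.simps(2)[where f = g] comp_apply)
  also have "\<dots> = (f ^^ k') ((g ^^ j) z)"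
    using homeomorphism_apply2[OF homeo] in_sphere_inv_iter Suc.prems by simp
  finally show ?case using Suc k' by simp
qed simp

lemma lift_add_one_eq_add_int: "\<exists>k::int. \<forall>x. F (x + 1) = F x + of_int k"
proof -
  define d where "d x = F (x + 1) - F x" for x
  have d_int: "d x \<in> \<int>" for x
  proof -
    have "circ (F (x + 1)) = circ (F x)"
      using lift_circ[of "x + 1"] lift_circ[of x] circ_add_of_int[of x 1] by simp
    then obtain k::int where "F x = F (x + 1) + of_int k" using circ_eq_iff by blast
    hence "d x = of_int (- k)" unfolding d_def by simp
    thus ?thesis by simp
  qed
  have "continuous_on UNIV d"
    unfolding d_def by (intro continuous_intros continuous_on_compose2[OF continuous_on_lift]) auto
  moreover have "1 \<le> \<bar>d y - d x\<bar>" if "d y \<noteq> d x" for x y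
  proof -
    obtain a b :: int where ab: "d y = of_int a" "d x = of_int b" using d_int by (meson Ints_cases)
    hence "1 \<le> \<bar>a - b\<bar>" using that by auto
    thus ?thesis unfolding ab by (simp flip: of_int_diff of_int_abs)
  qed
  ultimately have "d constant_on UNIV"
    by (intro continuous_discrete_range_constant[OF connected_UNIV]) (auto intro!: exI[of _ 1])
  moreover obtain k where "d 0 = of_int k" using d_int[of 0] by (auto elim: Ints_cases)
  ultimately show ?thesis
    unfolding constant_on_def d_def by (metis UNIV_I add_diff_cancel_left' diff_add_cancel)
qed

lemma lift_add_one: "F (x + 1) = F x + 1"
proof -
  obtain k::int where k: "\<And>x. F (x + 1) = F x + of_int k" using lift_add_one_eq_add_int by blast
  have "F 0 < F 1" using strict_mono_lift by (simp add: strict_mono_less)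
  hence "k \<ge> 1" using k[of 0] by simp
  moreover have "k \<le> 1"
  proof (rule ccontr)
    assume "\<not> k \<le> 1"
    then obtain y where y: "0 \<le> y" "y \<le> 1" "F y = F 0 + 1"
      using IVT'[of F 0 "F 0 + 1" 1] k[of 0] continuous_on_lift by auto
    have "f (circ y) = f (circ 0)"
      using y(3) circ_add_of_int[of "F 0" 1] by (simp add: lift_circ)
    hence "circ y = circ 0"
      using homeomorphism_apply1[OF homeo] circ_in_sphere by metis
    then obtain j::int where "y = of_int j" using circ_eq_iff[of 0 y] by auto
    moreover have "y \<noteq> 0" "y \<noteq> 1" using y k[of 0] \<open>\<not> k \<le> 1\<close> by auto
    ultimately show False using y by (cases "j = 0") auto
  qed
  ultimately show ?thesis using k[of x] by simp
qed

lemma lift_add_of_int: "F (x + of_int k) = F x + of_int k"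
proof -
  have nat: "F (x + of_nat n) = F x + of_nat n" for x n
    by (induction n arbitrary: x) (simp_all add: lift_add_one flip: add.assoc)
  show ?thesis
    using nat[of x "nat k"] nat[of "x + of_int k" "nat (- k)"] by (cases "k \<ge> 0") auto
qed

lemma lift_iter_add_of_int: "(F ^^ n) (x + of_int k) = (F ^^ n) x + of_int k"
  by (induction n) (simp_all add: lift_add_of_int)

lemma strict_mono_lift_iter: "strict_mono (F ^^ n)"
  by (induction n) (simp_all add: strict_mono_def strict_mono_lift[unfolded strict_mono_def])

lemma lift_iter_le_iff: "(F ^^ n) x \<le> (F ^^ n) y \<longleftrightarrow> x \<le> y"
  using strict_mono_lift_iter by (simp add: strict_mono_less_eq)

lemma continuous_on_lift_iter: "continuous_on S (F ^^ n)"
  by (induction n) (auto intro: continuous_on_compose2[OF continuous_on_lift])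

lemma iter_circ: "(f ^^ n) (circ x) = circ ((F ^^ n) x)"
  by (induction n) (simp_all add: lift_circ)

end

section \<open>Rotation number\<close>

definition rotnum :: "(real \<Rightarrow> real) \<Rightarrow> real" where
  "rotnum F = lim (\<lambda>n. (F ^^ n) 0 / real n)"

context circle_homeo
begin

lemma lift_iter_displacement: "\<bar>(F ^^ n) x - x - (F ^^ n) 0\<bar> \<le> 1"
proof -
  have "of_int \<lfloor>x\<rfloor> \<le> x" "x \<le> of_int (\<lfloor>x\<rfloor> + 1)" by linarith+
  hence "(F ^^ n) (0 + of_int \<lfloor>x\<rfloor>) \<le> (F ^^ n) x" "(F ^^ n) x \<le> (F ^^ n) (0 + of_int (\<lfloor>x\<rfloor> + 1))"
    by (simp_all only: lift_iter_le_iff add_0)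
  hence "(F ^^ n) 0 + of_int \<lfloor>x\<rfloor> \<le> (F ^^ n) x" "(F ^^ n) x \<le> (F ^^ n) 0 + of_int (\<lfloor>x\<rfloor> + 1)"
    by (simp_all only: lift_iter_add_of_int)
  thus ?thesis by simp linarith
qed

lemma lift_iter_mult_displacement: "\<bar>(F ^^ (m * n)) 0 - real m * (F ^^ n) 0\<bar> \<le> real m"
proof (induction m)
  case (Suc m)
  have "(F ^^ (Suc m * n)) 0 = (F ^^ n) ((F ^^ (m * n)) 0)" by (simp add: funpow_add)
  with Suc.IH lift_iter_displacement[of n "(F ^^ (m * n)) 0"] show ?case
    by (simp add: algebra_simps)
qed simp

lemma rotnum_quotients_close:
  assumes "m \<ge> 1" "n \<ge> 1"
  shows "\<bar>(F ^^ m) 0 / real m - (F ^^ n) 0 / real n\<bar> \<le> 1 / real m + 1 / real n"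
proof -
  have "\<bar>real n * (F ^^ m) 0 - real m * (F ^^ n) 0\<bar> \<le> real m + real n"
    using lift_iter_mult_displacement[of m n] lift_iter_mult_displacement[of n m]
    by (simp add: mult.commute)
  hence "\<bar>real n * (F ^^ m) 0 - real m * (F ^^ n) 0\<bar> / (real m * real n)
      \<le> (real m + real n) / (real m * real n)"
    using assms by (intro divide_right_mono) auto
  thus ?thesis using assms by (simp add: field_simps)
qed

lemma rotnum_LIMSEQ: "(\<lambda>n. (F ^^ n) 0 / real n) \<longlonglongrightarrow> rotnum F"
proof -
  have "Cauchy (\<lambda>n. (F ^^ n) 0 / real n)"
  proof (rule metric_CauchyI)
    fix e :: real assume "e > 0"
    obtain M :: nat where M_gt: "2 / e < real M" using reals_Archimedean2 by blast
    moreover have "0 < 2 / e" using \<open>e > 0\<close> by simp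
    ultimately have "real M > 0" by linarith
    hence M: "M \<ge> 1" "2 / real M < e"
      using M_gt \<open>e > 0\<close> by (simp_all add: field_simps)
    have "dist ((F ^^ m) 0 / real m) ((F ^^ n) 0 / real n) < e" if "m \<ge> M" "n \<ge> M" for m n
    proof -
      have "1 / real m \<le> 1 / real M" "1 / real n \<le> 1 / real M"
        using that M by (simp_all add: frac_le)
      thus ?thesis using rotnum_quotients_close[of m n] that M by (simp add: dist_real_def)
    qed
    thus "\<exists>M. \<forall>m\<ge>M. \<forall>n\<ge>M. dist ((F ^^ m) 0 / real m) ((F ^^ n) 0 / real n) < e" by blast
  qed
  thus ?thesis unfolding rotnum_def by (simp add: Cauchy_convergent_iff convergent_LIMSEQ_iff)
qed

lemma rotnum_LIMSEQ_at: "(\<lambda>n. (F ^^ n) x / real n) \<longlonglongrightarrow> rotnum F"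
proof -
  have "(\<lambda>n. ((F ^^ n) x - (F ^^ n) 0) / real n) \<longlonglongrightarrow> 0"
  proof (rule Lim_null_comparison)
    show "\<forall>\<^sub>F n in sequentially. norm (((F ^^ n) x - (F ^^ n) 0) / real n) \<le> (\<bar>x\<bar> + 1) / real n"
    proof (intro always_eventually allI)
      fix n
      have "\<bar>(F ^^ n) x - (F ^^ n) 0\<bar> \<le> \<bar>x\<bar> + 1"
        using lift_iter_displacement[of n x] by linarith
      thus "norm (((F ^^ n) x - (F ^^ n) 0) / real n) \<le> (\<bar>x\<bar> + 1) / real n"
        by (simp add: divide_right_mono)
    qed
  qed (rule lim_const_over_n)
  from tendsto_add[OF this rotnum_LIMSEQ] show ?thesis by (simp add: diff_divide_distrib)
qed

lemma rotnum_LIMSEQ_mult: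
  assumes "n \<ge> 1"
  shows "(\<lambda>k. (F ^^ (k * n)) x / real (k * n)) \<longlonglongrightarrow> rotnum F"
proof -
  have "strict_mono (\<lambda>k. k * n)" using assms by (simp add: strict_mono_def)
  from LIMSEQ_subseq_LIMSEQ[OF rotnum_LIMSEQ_at this] show ?thesis by (simp add: comp_def)
qed

lemma rotnum_ge_if_lift_iter_ge:
  assumes n: "n \<ge> 1" and ge: "\<And>y. y \<le> (F ^^ n) y + c"
  shows "0 \<le> real n * rotnum F + c"
proof -
  have iter: "- real k * c \<le> (F ^^ (k * n)) 0" for k
  proof (induction k)
    case (Suc k)
    have "(F ^^ (Suc k * n)) 0 = (F ^^ n) ((F ^^ (k * n)) 0)" by (simp add: funpow_add)
    with Suc.IH ge[of "(F ^^ (k * n)) 0"] show ?case by (simp add: algebra_simps)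
  qed simp
  have "- c / real n \<le> (F ^^ (k * n)) 0 / real (k * n)" if "k \<ge> 1" for k
    using iter[of k] that n by (simp add: field_simps)
  hence "- c / real n \<le> rotnum F"
    by (intro LIMSEQ_le_const[OF rotnum_LIMSEQ_mult[OF n]]) blast
  thus ?thesis using n by (simp add: field_simps)
qed

lemma rotnum_le_if_lift_iter_le:
  assumes n: "n \<ge> 1" and le: "\<And>y. (F ^^ n) y + c \<le> y"
  shows "real n * rotnum F + c \<le> 0"
proof -
  have iter: "(F ^^ (k * n)) 0 \<le> - real k * c" for k
  proof (induction k)
    case (Suc k)
    have "(F ^^ (Suc k * n)) 0 = (F ^^ n) ((F ^^ (k * n)) 0)" by (simp add: funpow_add)
    with Suc.IH le[of "(F ^^ (k * n)) 0"] show ?case by (simp add: algebra_simps)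
  qed simp
  have "(F ^^ (k * n)) 0 / real (k * n) \<le> - c / real n" if "k \<ge> 1" for k
    using iter[of k] that n by (simp add: field_simps)
  hence "rotnum F \<le> - c / real n"
    by (intro LIMSEQ_le_const2[OF rotnum_LIMSEQ_mult[OF n]]) blast
  thus ?thesis using n by (simp add: field_simps)
qed

lemma rotnum_eq_if_lift_periodic:
  assumes n: "n \<ge> 1" and periodic: "(F ^^ n) y + of_int p = y"
  shows "real n * rotnum F + of_int p = 0"
proof -
  have iter: "(F ^^ (k * n)) y = y - of_int k * of_int p" for k
  proof (induction k)
    case (Suc k)
    have "(F ^^ (Suc k * n)) y = (F ^^ n) (y + of_int (- (int k * p)))"
      using Suc by (simp add: funpow_add)
    also have "\<dots> = (F ^^ n) y - of_int (int k * p)"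
      by (simp only: lift_iter_add_of_int)
    also have "\<dots> = y - of_int (int (Suc k)) * of_int p"
      using periodic by (simp add: algebra_simps)
    finally show ?case by simp
  qed simp
  have "(\<lambda>k. (F ^^ (k * n)) y / real (k * n)) \<longlonglongrightarrow> 0 - of_int p / real n"
  proof (rule Lim_transform_eventually)
    show "(\<lambda>k. y / real n / real k - of_int p / real n) \<longlonglongrightarrow> 0 - of_int p / real n"
      by (intro tendsto_intros)
    show "\<forall>\<^sub>F k in sequentially.
        y / real n / real k - of_int p / real n = (F ^^ (k * n)) y / real (k * n)"
      using eventually_ge_at_top[of 1] by eventually_elim (use n in \<open>simp add: iter field_simps\<close>)
  qed
  hence "rotnum F = - of_int p / real n"
    using LIMSEQ_unique[OF rotnum_LIMSEQ_mult[OF n]] by simp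
  thus ?thesis using n by (simp add: field_simps)
qed

end

locale irrational_circle_homeo = circle_homeo +
  assumes irrational: "rotnum F \<notin> \<rat>"
begin

abbreviation \<rho> :: real where "\<rho> \<equiv> rotnum F"

lemma rotnum_mult_add_int_nonzero: "n \<ge> 1 \<Longrightarrow> real n * \<rho> + of_int p \<noteq> 0"
proof
  assume "n \<ge> 1" "real n * \<rho> + of_int p = 0"
  hence "\<rho> = - of_int p / real n" by (simp add: field_simps)
  thus False using irrational by simp
qed

lemma lift_not_periodic: "n \<ge> 1 \<Longrightarrow> (F ^^ n) y + of_int p \<noteq> y"
  using rotnum_eq_if_lift_periodic rotnum_mult_add_int_nonzero by blast

lemma lift_iter_displacement_sign:
  assumes "n \<ge> 1"
  shows "(\<forall>y. y < (F ^^ n) y + of_int p) \<or> (\<forall>y. (F ^^ n) y + of_int p < y)"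
proof (rule ccontr)
  assume "\<not> ?thesis"
  then obtain u v where u: "(F ^^ n) u + of_int p \<le> u" and v: "v \<le> (F ^^ n) v + of_int p"
    by (auto simp: not_less)
  define h where "h y = (F ^^ n) y + of_int p - y" for y
  have "continuous_on S h" for S unfolding h_def by (intro continuous_intros continuous_on_lift_iter)
  hence "\<exists>y. h y = 0"
    using IVT'[of h u 0 v] IVT2'[of h u 0 v] u v unfolding h_def by (cases "u \<le> v") auto
  thus False using lift_not_periodic[OF assms] unfolding h_def by fastforce
qed

lemma lift_iter_gt_iff: "y < (F ^^ n) y + of_int p \<longleftrightarrow> 0 < real n * \<rho> + of_int p"
  and lift_iter_lt_iff: "(F ^^ n) y + of_int p < y \<longleftrightarrow> real n * \<rho> + of_int p < 0"
proof -
  have "(y < (F ^^ n) y + of_int p \<longleftrightarrow> 0 < real n * \<rho> + of_int p) \<and>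
        ((F ^^ n) y + of_int p < y \<longleftrightarrow> real n * \<rho> + of_int p < 0)"
  proof (cases "n = 0")
    case False
    hence n: "n \<ge> 1" by simp
    note ne = rotnum_mult_add_int_nonzero[OF n, of p]
    from lift_iter_displacement_sign[OF n, of p] show ?thesis
    proof
      assume gt: "\<forall>y. y < (F ^^ n) y + of_int p"
      have "0 \<le> real n * \<rho> + of_int p"
        by (rule rotnum_ge_if_lift_iter_ge[OF n]) (use gt less_imp_le in blast)
      with ne gt[rule_format, of y] show ?thesis by auto
    next
      assume lt: "\<forall>y. (F ^^ n) y + of_int p < y"
      have "real n * \<rho> + of_int p \<le> 0"
        by (rule rotnum_le_if_lift_iter_le[OF n]) (use lt less_imp_le in blast)
      with ne lt[rule_format, of y] show ?thesis by auto
    qed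
  qed simp
  thus "y < (F ^^ n) y + of_int p \<longleftrightarrow> 0 < real n * \<rho> + of_int p"
    "(F ^^ n) y + of_int p < y \<longleftrightarrow> real n * \<rho> + of_int p < 0" by auto
qed

lemma orbit_le_iff:
  "(F ^^ n) 0 + of_int p \<le> (F ^^ m) 0 + of_int q \<longleftrightarrow> real n * \<rho> + of_int p \<le> real m * \<rho> + of_int q"
proof (cases "m \<le> n")
  case True
  have "(F ^^ n) 0 = (F ^^ (n - m)) ((F ^^ m) 0)"
    using True funpow_add[of "n - m" m F] by simp
  hence "(F ^^ n) 0 + of_int p \<le> (F ^^ m) 0 + of_int q \<longleftrightarrow>
      \<not> (F ^^ m) 0 < (F ^^ (n - m)) ((F ^^ m) 0) + of_int (p - q)"
    by auto
  also have "\<dots> \<longleftrightarrow> real n * \<rho> + of_int p \<le> real m * \<rho> + of_int q"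
    unfolding lift_iter_gt_iff using True by (simp add: algebra_simps not_less)
  finally show ?thesis .
next
  case False
  have "(F ^^ m) 0 = (F ^^ (m - n)) ((F ^^ n) 0)"
    using False funpow_add[of "m - n" n F] by simp
  hence "(F ^^ n) 0 + of_int p \<le> (F ^^ m) 0 + of_int q \<longleftrightarrow>
      \<not> (F ^^ (m - n)) ((F ^^ n) 0) + of_int (q - p) < (F ^^ n) 0"
    by auto
  also have "\<dots> \<longleftrightarrow> real n * \<rho> + of_int p \<le> real m * \<rho> + of_int q"
    unfolding lift_iter_lt_iff using False by (simp add: algebra_simps not_less)
  finally show ?thesis .
qed

lemma rotation_orbit_dense:
  assumes "a < b"
  obtains n :: nat and p :: int where "a < real n * \<rho> + of_int p" "real n * \<rho> + of_int p < b"
proof -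
  obtain h k :: int where k: "k > 0" "\<bar>of_int k * \<rho> - of_int h - (a + b) / 2\<bar> < (b - a) / 2"
  proof -
    have "(b - a) / 2 > 0" using assms by simp
    from sequence_of_fractional_parts_is_dense[OF irrational this] show ?thesis using that by blast
  qed
  hence "a < real (nat k) * \<rho> + of_int (- h)" "real (nat k) * \<rho> + of_int (- h) < b"
    by (auto simp: abs_less_iff field_simps)
  thus ?thesis by (rule that)
qed

section \<open>Poincar\'e's semiconjugacy\<close>

definition semiconj :: "real \<Rightarrow> real" where
  "semiconj x = Sup {real n * \<rho> + of_int p | n p. (F ^^ n) 0 + of_int p \<le> x}"

lemma bdd_above_semiconj_set: "bdd_above {real n * \<rho> + of_int p | n p. (F ^^ n) 0 + of_int p \<le> x}"
proof (rule bdd_aboveI)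
  fix s assume "s \<in> {real n * \<rho> + of_int p | n p. (F ^^ n) 0 + of_int p \<le> x}"
  then obtain n p where s: "s = real n * \<rho> + of_int p" and "(F ^^ n) 0 + of_int p \<le> x" by blast
  hence "\<not> (F ^^ 0) 0 + of_int (\<lceil>x\<rceil> + 1) \<le> (F ^^ n) 0 + of_int p" by simp linarith
  thus "s \<le> of_int (\<lceil>x\<rceil> + 1)" unfolding orbit_le_iff s by simp
qed

lemma semiconj_upper: "(F ^^ n) 0 + of_int p \<le> x \<Longrightarrow> real n * \<rho> + of_int p \<le> semiconj x"
  unfolding semiconj_def by (rule cSup_upper[OF _ bdd_above_semiconj_set]) blast

lemma semiconj_least:
  assumes "\<And>n p. (F ^^ n) 0 + of_int p \<le> x \<Longrightarrow> real n * \<rho> + of_int p \<le> c"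
  shows "semiconj x \<le> c"
  unfolding semiconj_def
proof (rule cSup_least)
  have "(F ^^ 0) 0 + of_int \<lfloor>x\<rfloor> \<le> x" by simp
  thus "{real n * \<rho> + of_int p | n p. (F ^^ n) 0 + of_int p \<le> x} \<noteq> {}" by blast
qed (use assms in blast)

lemma semiconj_orbit: "semiconj ((F ^^ n) 0 + of_int p) = real n * \<rho> + of_int p"
  by (intro antisym semiconj_least semiconj_upper) (simp_all add: orbit_le_iff)

lemma semiconj_mono: "x \<le> y \<Longrightarrow> semiconj x \<le> semiconj y"
  by (intro semiconj_least semiconj_upper) simp

lemma semiconj_add_of_int: "semiconj (x + of_int k) = semiconj x + of_int k"
proof (rule antisym)
  show "semiconj (x + of_int k) \<le> semiconj x + of_int k"
  proof (rule semiconj_least)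
    fix n p assume "(F ^^ n) 0 + of_int p \<le> x + of_int k"
    hence "real n * \<rho> + of_int (p - k) \<le> semiconj x" by (intro semiconj_upper) simp
    thus "real n * \<rho> + of_int p \<le> semiconj x + of_int k" by simp
  qed
  have "semiconj x \<le> semiconj (x + of_int k) - of_int k"
  proof (rule semiconj_least)
    fix n p assume "(F ^^ n) 0 + of_int p \<le> x"
    hence "real n * \<rho> + of_int (p + k) \<le> semiconj (x + of_int k)" by (intro semiconj_upper) simp
    thus "real n * \<rho> + of_int p \<le> semiconj (x + of_int k) - of_int k" by simp
  qed
  thus "semiconj x + of_int k \<le> semiconj (x + of_int k)" by simp
qed

lemma lift_orbit: "F ((F ^^ n) 0 + of_int p) = (F ^^ Suc n) 0 + of_int p"
  by (simp add: lift_add_of_int)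

lemma semiconj_lift_ge: "semiconj x + \<rho> \<le> semiconj (F x)"
proof -
  have "semiconj x \<le> semiconj (F x) - \<rho>"
  proof (rule semiconj_least)
    fix n p assume "(F ^^ n) 0 + of_int p \<le> x"
    hence "F ((F ^^ n) 0 + of_int p) \<le> F x"
      by (simp add: strict_mono_less_eq[OF strict_mono_lift])
    hence "(F ^^ Suc n) 0 + of_int p \<le> F x" by (simp only: lift_orbit)
    hence "real (Suc n) * \<rho> + of_int p \<le> semiconj (F x)" by (rule semiconj_upper)
    thus "real n * \<rho> + of_int p \<le> semiconj (F x) - \<rho>" by (simp add: algebra_simps)
  qed
  thus ?thesis by simp
qed

text \<open>The points \<open>F\<^sup>0 0 + p\<close> have no \<open>F\<close>-preimage on the orbit of \<open>0\<close>; for them the density of the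
  rotation orbit is needed.\<close>

lemma semiconj_lift_le: "semiconj (F x) \<le> semiconj x + \<rho>"
proof (rule semiconj_least)
  fix n p assume le: "(F ^^ n) 0 + of_int p \<le> F x"
  show "real n * \<rho> + of_int p \<le> semiconj x + \<rho>"
  proof (cases n)
    case (Suc m)
    hence "F ((F ^^ m) 0 + of_int p) \<le> F x" using le by (simp only: lift_orbit)
    hence "(F ^^ m) 0 + of_int p \<le> x" by (simp add: strict_mono_less_eq[OF strict_mono_lift])
    thus ?thesis using semiconj_upper Suc by (simp add: algebra_simps)
  next
    case 0
    show ?thesis
    proof (rule ccontr)
      assume "\<not> ?thesis"
      hence "semiconj x < of_int p - \<rho>" using 0 by simp
      then obtain m q
        where mq: "semiconj x < real m * \<rho> + of_int q" "real m * \<rho> + of_int q < of_int p - \<rho>"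
        by (rule rotation_orbit_dense)
      hence "\<not> (F ^^ 0) 0 + of_int p \<le> (F ^^ Suc m) 0 + of_int q"
        unfolding orbit_le_iff by (simp add: algebra_simps)
      hence "F ((F ^^ m) 0 + of_int q) < F x" using le 0 by (simp only: lift_orbit)
      hence "(F ^^ m) 0 + of_int q \<le> x" by (simp add: strict_mono_less[OF strict_mono_lift])
      thus False using semiconj_upper mq(1) by fastforce
    qed
  qed
qed

lemma semiconj_lift: "semiconj (F x) = semiconj x + \<rho>"
  using semiconj_lift_ge semiconj_lift_le by (rule antisym[rotated])

lemma semiconj_lift_iter: "semiconj ((F ^^ i) x) = semiconj x + real i * \<rho>"
  by (induction i) (simp_all add: semiconj_lift algebra_simps)

lemma continuous_semiconj: "continuous_on UNIV semiconj"
proof -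
  have "isCont semiconj x" for x
  proof (rule continuous_at_eps_delta[THEN iffD2], intro allI impI)
    fix e :: real assume "e > 0"
    obtain n p where lo: "semiconj x - e < real n * \<rho> + of_int p" "real n * \<rho> + of_int p < semiconj x"
      using rotation_orbit_dense[of "semiconj x - e" "semiconj x"] \<open>e > 0\<close> by auto
    obtain m q where hi: "semiconj x < real m * \<rho> + of_int q" "real m * \<rho> + of_int q < semiconj x + e"
      using rotation_orbit_dense[of "semiconj x" "semiconj x + e"] \<open>e > 0\<close> by auto
    define u v where "u = (F ^^ n) 0 + of_int p" and "v = (F ^^ m) 0 + of_int q"
    have u: "semiconj x - e < semiconj u" "semiconj u < semiconj x"
      and v: "semiconj x < semiconj v" "semiconj v < semiconj x + e"
      using lo hi by (simp_all add: u_def v_def semiconj_orbit)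
    hence "u < x" "x < v" using semiconj_mono by (meson not_le)+
    show "\<exists>d>0. \<forall>y. dist y x < d \<longrightarrow> dist (semiconj y) (semiconj x) < e"
    proof (intro exI[of _ "min (x - u) (v - x)"] conjI allI impI)
      fix y assume "dist y x < min (x - u) (v - x)"
      hence "semiconj u \<le> semiconj y" "semiconj y \<le> semiconj v"
        by (auto intro!: semiconj_mono simp: dist_real_def)
      thus "dist (semiconj y) (semiconj x) < e" using u v by (simp add: dist_real_def abs_less_iff)
    qed (use \<open>u < x\<close> \<open>x < v\<close> in simp)
  qed
  thus ?thesis by (simp add: continuous_at_imp_continuous_on)
qed

definition circle_semiconj :: "complex \<Rightarrow> complex" where
  "circle_semiconj z = circ (semiconj (SOME x. circ x = z))"

lemma circle_semiconj_circ: "circle_semiconj (circ y) = circ (semiconj y)"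
proof -
  define x where "x = (SOME x. circ x = circ y)"
  have "circ x = circ y" unfolding x_def by (rule someI) simp
  then obtain k :: int where "x = y + of_int k" using circ_eq_iff[of y x] by (auto simp: eq_commute)
  thus ?thesis
    unfolding circle_semiconj_def x_def[symmetric] by (simp add: semiconj_add_of_int circ_add_of_int)
qed

lemma circle_semiconj_lift: "circle_semiconj (f z) = circ \<rho> * circle_semiconj z" if z: "z \<in> Tcirc"
proof -
  obtain y where "circ y = z" using circ_surj[OF z] by blast
  thus ?thesis by (auto simp: lift_circ circle_semiconj_circ semiconj_lift circ_add mult.commute)
qed

lemma continuous_on_circle_semiconj: "continuous_on Tcirc circle_semiconj"
proof (rule continuous_on_sphere_via_circ)
  have "circle_semiconj \<circ> circ = circ \<circ> semiconj" by (auto simp: circle_semiconj_circ)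
  thus "continuous_on {0..1} (circle_semiconj \<circ> circ)"
    using continuous_on_compose[OF continuous_on_subset[OF continuous_semiconj] continuous_on_circ]
    by auto
qed (auto simp: circle_semiconj_def circ_in_sphere)

lemma circle_semiconj_image: "circle_semiconj ` Tcirc = Tcirc"
proof
  show "circle_semiconj ` Tcirc \<subseteq> Tcirc" by (auto simp: circle_semiconj_def circ_in_sphere)
  show "Tcirc \<subseteq> circle_semiconj ` Tcirc"
  proof
    fix z assume "z \<in> Tcirc"
    then obtain t where t: "circ t = z" using circ_surj by blast
    define t' where "t' = semiconj 0 + frac (t - semiconj 0)"
    have "semiconj 0 \<le> t'" "t' \<le> semiconj 1"
      using semiconj_add_of_int[of 0 1] frac_lt_1[of "t - semiconj 0"] frac_ge_0 by (auto simp: t'_def)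
    then obtain y where "semiconj y = t'"
      using IVT'[of semiconj 0 t' 1] continuous_on_subset[OF continuous_semiconj] by auto
    moreover have "circ t' = circ t"
      unfolding t'_def frac_def using circ_add_of_int[of t "- \<lfloor>t - semiconj 0\<rfloor>"] by simp
    ultimately have "circle_semiconj (circ y) = z" using t by (simp add: circle_semiconj_circ)
    thus "z \<in> circle_semiconj ` Tcirc" using circ_in_sphere by blast
  qed
qed

lemma conj_to_rotation_if_strict_mono_semiconj:
  assumes "strict_mono semiconj"
  shows "conj_to_rotation f"
proof -
  have "inj_on circle_semiconj Tcirc"
  proof (rule inj_onI)
    fix z1 z2 assume z: "z1 \<in> Tcirc" "z2 \<in> Tcirc" "circle_semiconj z1 = circle_semiconj z2"
    obtain x y where xy: "circ x = z1" "circ y = z2" using circ_surj z(1,2) by meson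
    then obtain k :: int where "semiconj y = semiconj (x + of_int k)"
      using z(3) circ_eq_iff[of "semiconj x" "semiconj y"]
      by (auto simp: circle_semiconj_circ semiconj_add_of_int)
    hence "y = x + of_int k" using assms by (simp add: strict_mono_eq)
    thus "z1 = z2" using xy by (simp add: circ_add_of_int)
  qed
  then obtain h' where "homeomorphism Tcirc Tcirc circle_semiconj h'"
    using homeomorphism_compact[OF compact_sphere continuous_on_circle_semiconj circle_semiconj_image]
    by blast
  thus ?thesis unfolding conj_to_rotation_def using circle_semiconj_lift by blast
qed

text \<open>If \<open>semiconj\<close> collapses an interval of half-length \<open>r\<close>, its midpoint never returns
  \<open>r\<close>-close to itself: a returning lift point would land in the interval, which \<open>semiconj\<close>
  maps to a single point, so \<open>i \<rho> + k = 0\<close>.\<close>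

lemma wandering_point_if_not_strict_mono_semiconj:
  assumes "\<not> strict_mono semiconj"
  obtains w r where "w \<in> Tcirc" "r > 0" "\<And>i. i \<ge> 1 \<Longrightarrow> r < tdist w ((f ^^ i) w)"
proof -
  obtain a b where ab: "a < b" "semiconj a = semiconj b"
    using assms semiconj_mono unfolding strict_mono_def by (meson order_le_less)
  define m r where "m = (a + b) / 2" and "r = (b - a) / 2"
  have collapse: "semiconj y = semiconj a" if "a \<le> y" "y \<le> b" for y
    using that ab semiconj_mono[of a y] semiconj_mono[of y b] by simp
  have "semiconj m = semiconj a" using ab by (intro collapse) (simp_all add: m_def)
  have "r < \<bar>(F ^^ i) m - m + of_int k\<bar>" if i: "i \<ge> 1" for i k
  proof (rule ccontr)
    assume "\<not> ?thesis"
    hence "\<bar>(F ^^ i) m - m + of_int k\<bar> \<le> r" by simp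
    moreover have "m - r = a" "m + r = b" by (simp_all add: m_def r_def field_simps)
    ultimately have "a \<le> (F ^^ i) m + of_int k" "(F ^^ i) m + of_int k \<le> b"
      unfolding abs_le_iff by linarith+
    hence "semiconj ((F ^^ i) m + of_int k) = semiconj m"
      unfolding \<open>semiconj m = semiconj a\<close> by (rule collapse)
    hence "real i * \<rho> + of_int k = 0" by (simp add: semiconj_add_of_int semiconj_lift_iter)
    thus False using rotnum_mult_add_int_nonzero[OF i] by simp
  qed
  hence "r < tdist (circ m) ((f ^^ i) (circ m))" if "i \<ge> 1" for i
    using that int_dist_eq_abs_add_int[of "(F ^^ i) m - m"] by (auto simp: iter_circ tdist_circ)
  moreover have "r > 0" using ab by (simp add: r_def)
  ultimately show ?thesis using that circ_in_sphere by blast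
qed

end

section \<open>Covering numbers\<close>

definition dyn_cover :: "(complex \<Rightarrow> complex) \<Rightarrow> nat \<Rightarrow> real \<Rightarrow> complex set \<Rightarrow> bool" where
  "dyn_cover f n \<epsilon> C \<longleftrightarrow> finite C \<and> C \<subseteq> Tcirc \<and> (\<forall>x\<in>Tcirc. \<exists>c\<in>C. dyn_dist f n c x < \<epsilon>)"

lemma cover_num_eq_Inf_dyn_cover: "cover_num f n \<epsilon> = Inf {card C | C. dyn_cover f n \<epsilon> C}"
  unfolding cover_num_def dyn_cover_def by simp

lemma tdist_le_dyn_dist: "k < n \<Longrightarrow> tdist ((f ^^ k) z) ((f ^^ k) w) \<le> dyn_dist f n z w"
  unfolding dyn_dist_def by (rule Max_ge) auto

lemma dyn_dist_less_iff:
  "n \<ge> 1 \<Longrightarrow> dyn_dist f n z w < \<epsilon> \<longleftrightarrow> (\<forall>k<n. tdist ((f ^^ k) z) ((f ^^ k) w) < \<epsilon>)"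
  unfolding dyn_dist_def by (subst Max_less_iff) (auto simp: lessThan_empty_iff)

context circle_homeo
begin

text \<open>Recording the \<open>1/N\<close>-grid cell of each of the first \<open>n\<close> lift iterates determines a point of
  \<open>[0, 1)\<close> up to \<open>d\<^sub>n\<close>-distance \<open>1/N\<close>; since every cell index is monotone in the point and grows
  by at most \<open>N\<close> over \<open>[0, 1)\<close>, already their sum does, and the sum takes at most \<open>n N + 1\<close> values.\<close>

definition grid_code :: "nat \<Rightarrow> nat \<Rightarrow> real \<Rightarrow> int" where
  "grid_code N n x = (\<Sum>k<n. \<lfloor>real N * (F ^^ k) x\<rfloor>)"

lemma grid_cell_mono: "x \<le> y \<Longrightarrow> \<lfloor>real N * (F ^^ k) x\<rfloor> \<le> \<lfloor>real N * (F ^^ k) y\<rfloor>"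
  by (intro floor_mono mult_left_mono) (simp_all add: lift_iter_le_iff)

lemma grid_code_image_subset:
  "grid_code N n ` {0..<1} \<subseteq> {grid_code N n 0 .. grid_code N n 0 + int (n * N)}"
proof -
  have "grid_code N n x \<le> grid_code N n 0 + int (n * N)" if "x \<in> {0..<1}" for x
  proof -
    have "\<lfloor>real N * (F ^^ k) x\<rfloor> \<le> \<lfloor>real N * (F ^^ k) 0\<rfloor> + int N" for k
    proof -
      have "(F ^^ k) x \<le> (F ^^ k) 0 + 1"
        using that lift_iter_add_of_int[of k 0 1] lift_iter_le_iff[of k x 1] by simp
      hence "real N * (F ^^ k) x \<le> real N * ((F ^^ k) 0 + 1)" by (simp add: mult_left_mono)
      hence "real N * (F ^^ k) x \<le> real N * (F ^^ k) 0 + of_int (int N)" by (simp add: distrib_left)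
      hence "\<lfloor>real N * (F ^^ k) x\<rfloor> \<le> \<lfloor>real N * (F ^^ k) 0 + of_int (int N)\<rfloor>"
        by (rule floor_mono)
      thus ?thesis by simp
    qed
    hence "grid_code N n x \<le> (\<Sum>k<n. \<lfloor>real N * (F ^^ k) 0\<rfloor> + int N)"
      unfolding grid_code_def by (intro sum_mono)
    also have "\<dots> = grid_code N n 0 + int (n * N)" unfolding grid_code_def by (simp add: sum.distrib)
    finally show ?thesis .
  qed
  moreover have "grid_code N n 0 \<le> grid_code N n x" if "x \<in> {0..<1}" for x
    unfolding grid_code_def using that by (intro sum_mono grid_cell_mono) simp
  ultimately show ?thesis by auto
qed

lemma finite_grid_code_image: "finite (grid_code N n ` {0..<1})"
  using grid_code_image_subset by (rule finite_subset) simp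

lemma card_grid_code_image: "card (grid_code N n ` {0..<1}) \<le> n * N + 1"
proof -
  have "card (grid_code N n ` {0..<1}) \<le> card {grid_code N n 0 .. grid_code N n 0 + int (n * N)}"
    using grid_code_image_subset by (intro card_mono) auto
  also have "\<dots> = nat (int (n * N) + 1)" by (simp add: card_atLeastAtMost_int)
  also have "\<dots> = n * N + 1" by (simp only: nat_int flip: of_nat_Suc)
  finally show ?thesis .
qed

lemma grid_cells_eq_if_grid_code_eq:
  assumes "u \<le> v" "grid_code N n u = grid_code N n v" "k < n"
  shows "\<lfloor>real N * (F ^^ k) u\<rfloor> = \<lfloor>real N * (F ^^ k) v\<rfloor>"
proof (rule ccontr)
  assume ne: "\<lfloor>real N * (F ^^ k) u\<rfloor> \<noteq> \<lfloor>real N * (F ^^ k) v\<rfloor>"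
  have "\<forall>j\<in>{..<n}. \<lfloor>real N * (F ^^ j) u\<rfloor> \<le> \<lfloor>real N * (F ^^ j) v\<rfloor>"
    using grid_cell_mono[OF assms(1)] by blast
  moreover have "\<exists>j\<in>{..<n}. \<lfloor>real N * (F ^^ j) u\<rfloor> < \<lfloor>real N * (F ^^ j) v\<rfloor>"
    using ne grid_cell_mono[OF assms(1), of N k] assms(3) by (intro bexI[of _ k]) auto
  ultimately have "grid_code N n u < grid_code N n v"
    unfolding grid_code_def by (rule sum_strict_mono_ex1[OF finite_lessThan])
  thus False using assms(2) by simp
qed

lemma lift_iter_close_if_grid_code_eq:
  assumes "N \<ge> 1" "grid_code N n u = grid_code N n v" "k < n"
  shows "\<bar>(F ^^ k) u - (F ^^ k) v\<bar> < 1 / real N"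
proof -
  define a b where "a = real N * (F ^^ k) u" and "b = real N * (F ^^ k) v"
  have "\<lfloor>a\<rfloor> = \<lfloor>b\<rfloor>"
  proof (cases "u \<le> v")
    case True
    show ?thesis unfolding a_def b_def using grid_cells_eq_if_grid_code_eq[OF True assms(2,3)] by simp
  next
    case False
    hence "v \<le> u" by simp
    thus ?thesis
      unfolding a_def b_def using grid_cells_eq_if_grid_code_eq[OF _ assms(2)[symmetric] assms(3)] by simp
  qed
  hence "of_int \<lfloor>a\<rfloor> = (of_int \<lfloor>b\<rfloor> :: real)" by simp
  moreover have "of_int \<lfloor>a\<rfloor> \<le> a" "a < of_int \<lfloor>a\<rfloor> + 1" "of_int \<lfloor>b\<rfloor> \<le> b" "b < of_int \<lfloor>b\<rfloor> + 1"
    using floor_correct[of a] floor_correct[of b] by simp_all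
  ultimately have "a - b < 1 \<and> b - a < 1" by linarith
  hence "\<bar>a - b\<bar> < 1" by (simp add: abs_less_iff)
  hence "real N * \<bar>(F ^^ k) u - (F ^^ k) v\<bar> < 1"
    unfolding a_def b_def by (simp add: abs_mult flip: right_diff_distrib)
  thus ?thesis using assms(1) by (simp add: field_simps)
qed

lemma dyn_cover_exists:
  assumes "N \<ge> 1" "1 / real N < \<epsilon>" "n \<ge> 1"
  obtains C where "dyn_cover f n \<epsilon> C" "card C \<le> n * N + 1"
proof -
  define rep where "rep c = (SOME x. x \<in> {0..<1} \<and> grid_code N n x = c)" for c
  have rep: "rep c \<in> {0..<1} \<and> grid_code N n (rep c) = c" if "c \<in> grid_code N n ` {0..<1}" for c
    unfolding rep_def by (rule someI_ex) (use that in auto)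
  define C where "C = (\<lambda>c. circ (rep c)) ` grid_code N n ` {0..<1}"
  note fin = finite_grid_code_image[of N n]
  have "\<exists>c\<in>C. dyn_dist f n c z < \<epsilon>" if z: "z \<in> Tcirc" for z
  proof -
    obtain u where u: "u \<in> {0..<1}" "circ u = z" using circ_surj[OF z] by blast
    define v where "v = rep (grid_code N n u)"
    have v: "grid_code N n v = grid_code N n u" using rep u(1) unfolding v_def by blast
    have "tdist ((f ^^ k) (circ v)) ((f ^^ k) (circ u)) < \<epsilon>" if "k < n" for k
      using lift_iter_close_if_grid_code_eq[OF assms(1) v that]
        int_dist_le_abs[of "(F ^^ k) u - (F ^^ k) v"] assms(2) by (simp add: iter_circ tdist_circ abs_minus_commute)
    hence "dyn_dist f n (circ v) z < \<epsilon>" using dyn_dist_less_iff[OF assms(3)] u(2) by blast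
    moreover have "circ v \<in> C" unfolding C_def v_def using u(1) by blast
    ultimately show ?thesis by blast
  qed
  hence "dyn_cover f n \<epsilon> C" unfolding dyn_cover_def C_def using fin circ_in_sphere by auto
  moreover have "card C \<le> n * N + 1"
    unfolding C_def using card_image_le[OF fin] card_grid_code_image le_trans by blast
  ultimately show ?thesis by (rule that)
qed

text \<open>The backward orbit \<open>g\<^sup>j w\<close>, \<open>j < n\<close>, of a point that never returns \<open>2\<epsilon>\<close>-close to itself is
  \<open>(n, \<epsilon>)\<close>-separated, so no \<open>d\<^sub>n\<close>-ball of radius \<open>\<epsilon>\<close> contains two of its points.\<close>

lemma card_dyn_cover_ge:
  assumes w: "w \<in> Tcirc" and far: "\<And>i. i \<ge> 1 \<Longrightarrow> r < tdist w ((f ^^ i) w)"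
    and "2 * \<epsilon> \<le> r" and C: "dyn_cover f n \<epsilon> C"
  shows "n \<le> card C"
proof -
  have "\<forall>j. \<exists>c\<in>C. dyn_dist f n c ((g ^^ j) w) < \<epsilon>"
    using C in_sphere_inv_iter[OF w] unfolding dyn_cover_def by blast
  then obtain c where c: "\<And>j. c j \<in> C" "\<And>j. dyn_dist f n (c j) ((g ^^ j) w) < \<epsilon>" by metis
  have "inj_on c {..<n}"
  proof (rule linorder_inj_onI)
    fix j k assume jk: "j < k" "k \<in> {..<n}"
    show "c j \<noteq> c k"
    proof
      assume "c j = c k"
      define z where "z = (f ^^ k) (c k)"
      have "c k \<in> Tcirc" using c(1) C unfolding dyn_cover_def by blast
      hence z: "z \<in> Tcirc" unfolding z_def by (rule in_sphere_iter)
      have "tdist z ((f ^^ (k - j)) w) < \<epsilon>" "tdist z w < \<epsilon>"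
        using tdist_le_dyn_dist[of k n f "c j" "(g ^^ j) w"]
          tdist_le_dyn_dist[of k n f "c k" "(g ^^ k) w"]
          c(2)[of j] c(2)[of k] jk \<open>c j = c k\<close> iter_inv_iter[OF w, of j k] iter_inv_iter[OF w, of k k]
        unfolding z_def by auto
      hence "tdist w ((f ^^ (k - j)) w) < 2 * \<epsilon>"
        using tdist_triangle[OF w z in_sphere_iter[OF w, of "k - j"]] tdist_commute[OF w z] by simp
      moreover have "r < tdist w ((f ^^ (k - j)) w)" using far jk by simp
      ultimately show False using \<open>2 * \<epsilon> \<le> r\<close> by simp
    qed
  qed auto
  hence "n = card (c ` {..<n})" by (simp add: card_image)
  also have "\<dots> \<le> card C" using c C unfolding dyn_cover_def by (intro card_mono) auto
  finally show ?thesis .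
qed

lemma cover_num_linear_bounds:
  assumes "w \<in> Tcirc" "\<And>i. i \<ge> 1 \<Longrightarrow> r < tdist w ((f ^^ i) w)" "0 < \<epsilon>" "2 * \<epsilon> \<le> r"
  shows "\<exists>c. \<forall>n\<ge>1. n \<le> cover_num f n \<epsilon> \<and> real (cover_num f n \<epsilon>) \<le> c * real n"
proof -
  obtain N :: nat where N: "1 / \<epsilon> < real N" using reals_Archimedean2 by blast
  moreover have "0 < 1 / \<epsilon>" using assms(3) by simp
  ultimately have "real N > 0" by linarith
  hence "N \<ge> 1" "1 / real N < \<epsilon>" using N assms(3) by (simp_all add: field_simps)
  have "n \<le> cover_num f n \<epsilon> \<and> real (cover_num f n \<epsilon>) \<le> (real N + 1) * real n" if n: "n \<ge> 1" for n
  proof -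
    obtain C where C: "dyn_cover f n \<epsilon> C" "card C \<le> n * N + 1"
      using dyn_cover_exists[OF \<open>N \<ge> 1\<close> \<open>1 / real N < \<epsilon>\<close> n] by blast
    have "cover_num f n \<epsilon> \<le> card C"
      unfolding cover_num_eq_Inf_dyn_cover using C(1) by (intro cInf_lower) auto
    moreover have "n \<le> cover_num f n \<epsilon>"
      unfolding cover_num_eq_Inf_dyn_cover using C(1) card_dyn_cover_ge[OF assms(1,2,4)]
      by (intro cInf_greatest) auto
    moreover have "real (cover_num f n \<epsilon>) \<le> real (n * N + 1)"
      using \<open>cover_num f n \<epsilon> \<le> card C\<close> C(2) by (simp only: of_nat_le_iff)
    moreover have "real (n * N + 1) \<le> (real N + 1) * real n" using n by (simp add: algebra_simps)
    ultimately show ?thesis by linarith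
  qed
  thus ?thesis by blast
qed

end

section \<open>Polynomial entropy\<close>

lemma limsup_ln_ratio_eq_1_if_linear_bounds:
  fixes u :: "nat \<Rightarrow> nat" and c :: real
  assumes lower: "\<And>n. n \<ge> 1 \<Longrightarrow> n \<le> u n" and upper: "\<And>n. n \<ge> 1 \<Longrightarrow> real (u n) \<le> c * real n"
  shows "limsup (\<lambda>n. ereal (ln (real (u n)) / ln (real n))) = 1"
proof (rule antisym)
  have "c \<ge> 1" using lower[of 1] upper[of 1] by simp
  have upper_ev: "\<forall>\<^sub>F n in sequentially.
      ereal (ln (real (u n)) / ln (real n)) \<le> ereal (1 + ln c / ln (real n))"
    using eventually_ge_at_top[of 2]
  proof eventually_elim
    case (elim n)
    have "ln (real (u n)) \<le> ln (c * real n)" using lower[of n] upper[of n] elim by simp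
    also have "\<dots> = ln c + ln (real n)" using elim \<open>c \<ge> 1\<close> by (simp add: ln_mult)
    finally show ?case using elim by (simp add: field_simps)
  qed
  have "(\<lambda>n. ereal (1 + ln c / ln (real n))) \<longlonglongrightarrow> 1"
  proof -
    have "(\<lambda>n. ln c / ln (real n)) \<longlonglongrightarrow> 0"
      by (intro tendsto_divide_0[OF tendsto_const] filterlim_at_top_imp_at_infinity
          filterlim_compose[OF ln_at_top filterlim_real_sequentially])
    hence "(\<lambda>n. 1 + ln c / ln (real n)) \<longlonglongrightarrow> 1 + 0" by (intro tendsto_intros)
    thus ?thesis unfolding one_ereal_def lim_ereal by simp
  qed
  hence "limsup (\<lambda>n. ereal (1 + ln c / ln (real n))) = 1"
    by (rule lim_imp_Limsup[OF trivial_limit_sequentially])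
  with Limsup_mono[OF upper_ev] show "limsup (\<lambda>n. ereal (ln (real (u n)) / ln (real n))) \<le> 1"
    by simp
  have "\<forall>\<^sub>F n in sequentially. 1 \<le> ereal (ln (real (u n)) / ln (real n))"
    using eventually_ge_at_top[of 2]
  proof eventually_elim
    case (elim n)
    have "ln (real n) \<le> ln (real (u n))" using lower[of n] elim by simp
    thus ?case using elim by (simp add: one_ereal_def field_simps)
  qed
  thus "1 \<le> limsup (\<lambda>n. ereal (ln (real (u n)) / ln (real n)))"
    by (rule le_Limsup[OF trivial_limit_sequentially])
qed

lemma hpol_eq_1_if_linear_cover_bounds:
  assumes "r > 0"
    and "\<And>\<epsilon>. 0 < \<epsilon> \<Longrightarrow> \<epsilon> < r \<Longrightarrow>
      \<exists>c. \<forall>n\<ge>1. n \<le> cover_num f n \<epsilon> \<and> real (cover_num f n \<epsilon>) \<le> c * real n"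
  shows "hpol f = 1"
proof -
  define L where "L \<epsilon> = limsup (\<lambda>n. ereal (ln (real (cover_num f n \<epsilon>)) / ln (real n)))" for \<epsilon>
  have "L \<epsilon> = 1" if eps: "0 < \<epsilon>" "\<epsilon> < r" for \<epsilon>
  proof -
    obtain c where "\<forall>n\<ge>1. n \<le> cover_num f n \<epsilon> \<and> real (cover_num f n \<epsilon>) \<le> c * real n"
      using assms(2)[OF eps] by blast
    thus ?thesis unfolding L_def by (intro limsup_ln_ratio_eq_1_if_linear_bounds) auto
  qed
  hence "\<forall>\<^sub>F \<epsilon> in at_right 0. L \<epsilon> = 1"
    unfolding eventually_at_right_field using assms(1) by blast
  hence "(L \<longlongrightarrow> 1) (at_right 0)" by (rule tendsto_eventually)
  thus ?thesis unfolding hpol_def L_def[symmetric] by (intro tendsto_Lim) simp_all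
qed

theorem proposition3p3:
  fixes f :: "complex \<Rightarrow> complex"
  assumes "orient_pres_homeo f"
    and "rotation_number f \<notin> circ ` \<rat>"
    and "\<not> conj_to_rotation f"
  shows "hpol f = 1"
proof -
  define F where "F = (SOME F. is_lift f F)"
  obtain g where "homeomorphism Tcirc Tcirc f g" "is_lift f F"
    using assms(1) someI_ex[of "is_lift f"] unfolding orient_pres_homeo_def F_def by blast
  then interpret circle_homeo f g F by unfold_locales
  have "rotation_number f = circ (rotnum F)"
    unfolding rotation_number_def rotnum_def F_def Let_def ..
  with assms(2) interpret irrational_circle_homeo f g F by unfold_locales auto
  have "\<not> strict_mono semiconj"
    using conj_to_rotation_if_strict_mono_semiconj assms(3) by blast
  then obtain w r where w: "w \<in> Tcirc" "r > 0" "\<And>i. i \<ge> 1 \<Longrightarrow> r < tdist w ((f ^^ i) w)"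
    using wandering_point_if_not_strict_mono_semiconj by blast
  show ?thesis
  proof (rule hpol_eq_1_if_linear_cover_bounds[of "r / 2"])
    fix \<epsilon> :: real assume "0 < \<epsilon>" "\<epsilon> < r / 2"
    thus "\<exists>c. \<forall>n\<ge>1. n \<le> cover_num f n \<epsilon> \<and> real (cover_num f n \<epsilon>) \<le> c * real n"
      by (intro cover_num_linear_bounds[OF w(1,3)]) simp_all
  qed (use w in simp)
qed

end
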